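(* Let $k,q\ge0$, $p=k+q$, $m=2^p$, $n=2^q$, and $U=\frac{1}{\sqrt{2^p}}H(2^p)$. Fix an integer $c$ with $0\le c\le 2^k-1$ and the input state $\vec s=(1+nc,2+nc,\dots,n+nc)$ of $n$ identical particles. For an output state $\vec t=(t_1,\dots,t_n)$, define $t'_i=((t_i-1)\bmod n)+1$ and let $\vec t'$ be the nondecreasing rearrangement of $(t'_1,\dots,t'_n)$. Then $\vec t$ is suppressed for $U$ with input $\vec s$ if and only if $\vec t'$ is suppressed for $U'=\frac{1}{\sqrt{2^q}}H(2^q)$ with input $(1,2,\dots,n)$ (one particle per mode). This holds both when the particles are bosons and when they are fermions.
   Context: For $m=2^p$, the Sylvester matrix $H(m)$ is defined recursively by $H(1)=[1]$ and $H(2^p)=\begin{bmatrix}H(2^{p-1})&H(2^{p-1})\\ H(2^{p-1})&-H(2^{p-1})\end{bmatrix}$, rows and columns indexed $1,\dots,m$. An $n$-particle state on $m$ modes is a nondecreasing tuple $\vec t=(t_1\le\dots\le t_n)$ with $t_i\in\{1,\dots,m\}$; $\mu_k(\vec t)=|\{i:t_i=k\}|$. For input $\vec s$ and output $\vec t$ under unitary $U$, the scattering matrix is $S_{i,j}=U_{t_i,s_j}$; the bosonic amplitude is $\mathrm{perm}\,S/\sqrt{\prod_k\mu_k(\vec s)!\prod_k\mu_k(\vec t)!}$ and the fermionic amplitude is $\det S/\sqrt{\prod_k\mu_k(\vec s)!\prod_k\mu_k(\vec t)!}$. An output state is suppressed if its amplitude is zero. *)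

theory Defs
  imports Complex_Main "Jordan_Normal_Form.Determinant"
begin

text \<open>Sylvester matrix H(2^p), 1-indexed entries (i,j) with 1 \<le> i,j \<le> 2^p,
  defined by the block recursion H(2^(p+1)) = [[H, H],[H, -H]].\<close>
fun sylvester :: "nat \<Rightarrow> nat \<Rightarrow> nat \<Rightarrow> int" where
  "sylvester 0 i j = 1"
| "sylvester (Suc p) i j =
     (let h = 2 ^ p in
      if i \<le> h \<and> j \<le> h then sylvester p i j
      else if i \<le> h then sylvester p i (j - h)
      else if j \<le> h then sylvester p (i - h) j
      else - sylvester p (i - h) (j - h))"

definition unitary_H :: "nat \<Rightarrow> nat \<Rightarrow> nat \<Rightarrow> real" where
  "unitary_H p i j = real_of_int (sylvester p i j) / sqrt (2 ^ p)"

definition is_state :: "nat \<Rightarrow> nat \<Rightarrow> nat list \<Rightarrow> bool" where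
  "is_state m n t \<longleftrightarrow> length t = n \<and> sorted t \<and> set t \<subseteq> {1..m}"

definition occ :: "nat list \<Rightarrow> nat \<Rightarrow> nat" where
  "occ t k = count_list t k"

definition scattering :: "(nat \<Rightarrow> nat \<Rightarrow> real) \<Rightarrow> nat list \<Rightarrow> nat list \<Rightarrow> real mat" where
  "scattering U s t = mat (length t) (length s) (\<lambda>(i, j). U (t ! i) (s ! j))"

definition permanent :: "'a :: comm_ring_1 mat \<Rightarrow> 'a" where
  "permanent A = (\<Sum>p | p permutes {0..<dim_row A}. \<Prod>i = 0..<dim_row A. A $$ (i, p i))"

definition normalization :: "nat list \<Rightarrow> nat list \<Rightarrow> real" where
  "normalization s t = sqrt (real ((\<Prod>k\<in>set s. fact (occ s k)) * (\<Prod>k\<in>set t. fact (occ t k))))"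

definition boson_amp :: "(nat \<Rightarrow> nat \<Rightarrow> real) \<Rightarrow> nat list \<Rightarrow> nat list \<Rightarrow> real" where
  "boson_amp U s t = permanent (scattering U s t) / normalization s t"

definition fermion_amp :: "(nat \<Rightarrow> nat \<Rightarrow> real) \<Rightarrow> nat list \<Rightarrow> nat list \<Rightarrow> real" where
  "fermion_amp U s t = det (scattering U s t) / normalization s t"

definition suppressed_boson :: "(nat \<Rightarrow> nat \<Rightarrow> real) \<Rightarrow> nat list \<Rightarrow> nat list \<Rightarrow> bool" where
  "suppressed_boson U s t \<longleftrightarrow> boson_amp U s t = 0"

definition suppressed_fermion :: "(nat \<Rightarrow> nat \<Rightarrow> real) \<Rightarrow> nat list \<Rightarrow> nat list \<Rightarrow> bool" where
  "suppressed_fermion U s t \<longleftrightarrow> fermion_amp U s t = 0"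

definition fold_state :: "nat \<Rightarrow> nat list \<Rightarrow> nat list" where
  "fold_state n t = sort (map (\<lambda>x. (x - 1) mod n + 1) t)"

end

theory Submission
  imports Defs "HOL-Combinatorics.List_Permutation"
begin

text \<open>Write an output mode as a 2^q + x + 1 with x < 2^q. Since H(2^(k+q)) is the Kronecker
  product H(2^k) \<otimes> H(2^q) and every input mode lies in block c, row i of the scattering matrix
  is \<plusminus>2^(-k/2) times row i of the scattering matrix of U' for the output modes x + 1. So
  permanent and determinant change only by a nonzero factor; sorting the folded outputs merely
  permutes rows, and the normalisations are positive.\<close>

lemma sylvester_neq_0: "sylvester p i j \<noteq> 0"
  by (induction p arbitrary: i j) (auto simp: Let_def)

lemma mult_add_less_mult_iff:
  fixes a b m x :: nat
  assumes "x < m"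
  shows "a * m + x < b * m \<longleftrightarrow> a < b"
proof
  assume "a * m + x < b * m"
  then have "a * m < b * m" by linarith
  then show "a < b" by simp
next
  assume "a < b"
  then have "(a + 1) * m \<le> b * m" by (intro mult_right_mono) auto
  then show "a * m + x < b * m" using assms by simp
qed

lemma mult_add_diff_mult:
  fixes a b m x :: nat
  assumes "b \<le> a"
  shows "a * m + x - b * m = (a - b) * m + x"
  using assms by (simp add: diff_mult_distrib mult_le_mono1)

lemma sylvester_kronecker:
  assumes "a < 2 ^ k" "b < 2 ^ k" "x < 2 ^ q" "y < 2 ^ q"
  shows "sylvester (k + q) (a * 2 ^ q + x + 1) (b * 2 ^ q + y + 1)
       = sylvester k (a + 1) (b + 1) * sylvester q (x + 1) (y + 1)"
  using assms(1,2)
proof (induction k arbitrary: a b)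
  case 0
  then show ?case by simp
next
  case (Suc k)
  have h: "(2::nat) ^ (k + q) = 2 ^ k * 2 ^ q" by (simp add: power_add)
  have le_iff: "c * 2 ^ q + z + 1 \<le> 2 ^ (k + q) \<longleftrightarrow> c < 2 ^ k" if "z < 2 ^ q" for c z :: nat
    using mult_add_less_mult_iff[OF that, of c "2 ^ k"] by (simp add: h Suc_le_eq)
  have shift: "c * 2 ^ q + z + 1 - 2 ^ (k + q) = (c - 2 ^ k) * 2 ^ q + z + 1"
    if "\<not> c < 2 ^ k" for c z :: nat
    using mult_add_diff_mult[of "2 ^ k" c "2 ^ q" "z + 1"] that by (simp add: h)
  have "a - 2 ^ k < 2 ^ k" "b - 2 ^ k < 2 ^ k" using Suc.prems by auto
  then show ?case
    using Suc.IH[of a b] Suc.IH[of "a - 2 ^ k" b] Suc.IH[of a "b - 2 ^ k"]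
      Suc.IH[of "a - 2 ^ k" "b - 2 ^ k"] Suc.prems assms(3,4) le_iff shift
    by (auto simp: Let_def Suc_diff_le)
qed

lemma prod_scale_rows:
  fixes A B :: "'a :: comm_ring_1 mat"
  assumes "\<And>i j. i < n \<Longrightarrow> j < n \<Longrightarrow> A $$ (i, j) = e i * B $$ (i, j)"
    and "p permutes {0..<n}"
  shows "(\<Prod>i = 0..<n. A $$ (i, p i)) = prod e {0..<n} * (\<Prod>i = 0..<n. B $$ (i, p i))"
proof -
  have "(\<Prod>i = 0..<n. A $$ (i, p i)) = (\<Prod>i = 0..<n. e i * B $$ (i, p i))"
    using assms permutes_in_image[OF assms(2)] by (intro prod.cong) auto
  then show ?thesis by (simp add: prod.distrib)
qed

lemma det_scale_rows:
  fixes A B :: "'a :: comm_ring_1 mat"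
  assumes "A \<in> carrier_mat n n" "B \<in> carrier_mat n n"
    and "\<And>i j. i < n \<Longrightarrow> j < n \<Longrightarrow> A $$ (i, j) = e i * B $$ (i, j)"
  shows "det A = prod e {0..<n} * det B"
  unfolding det_def'[OF assms(1)] det_def'[OF assms(2)] sum_distrib_left
  using prod_scale_rows[OF assms(3)] by (intro sum.cong) (auto simp: ac_simps)

lemma permanent_scale_rows:
  fixes A B :: "'a :: comm_ring_1 mat"
  assumes "A \<in> carrier_mat n n" "B \<in> carrier_mat n n"
    and "\<And>i j. i < n \<Longrightarrow> j < n \<Longrightarrow> A $$ (i, j) = e i * B $$ (i, j)"
  shows "permanent A = prod e {0..<n} * permanent B"
  unfolding permanent_def sum_distrib_left
  using assms prod_scale_rows[OF assms(3)] by (intro sum.cong) auto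

lemma permanent_permute_rows:
  fixes A :: "'a :: comm_ring_1 mat"
  assumes A: "A \<in> carrier_mat n n" and p: "p permutes {0..<n}"
  shows "permanent (mat n n (\<lambda>(i, j). A $$ (p i, j))) = permanent A"
proof -
  let ?P = "{q. q permutes {0..<n}}"
  have "permanent (mat n n (\<lambda>(i, j). A $$ (p i, j))) = (\<Sum>q\<in>?P. \<Prod>i = 0..<n. A $$ (p i, q i))"
    unfolding permanent_def using p by (auto intro!: sum.cong prod.cong simp: permutes_in_image)
  also have "\<dots> = (\<Sum>q\<in>?P. \<Prod>i = 0..<n. A $$ (p i, q (p i)))"
    by (rule sum_permutations_compose_right[OF p, unfolded o_def])
  also have "\<dots> = (\<Sum>q\<in>?P. \<Prod>i = 0..<n. A $$ (i, q i))"
    by (intro sum.cong refl prod.permute[OF p, symmetric, unfolded o_def])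
  also have "\<dots> = permanent A"
    unfolding permanent_def using A by simp
  finally show ?thesis .
qed

lemma unitary_H_kronecker:
  assumes r: "1 \<le> r" "r \<le> 2 ^ (k + q)" and "c < 2 ^ k" "j < 2 ^ q"
  shows "unitary_H (k + q) r (c * 2 ^ q + j + 1)
       = sylvester k ((r - 1) div 2 ^ q + 1) (c + 1) / sqrt (2 ^ k)
         * unitary_H q ((r - 1) mod 2 ^ q + 1) (j + 1)"
proof -
  define a where "a = (r - 1) div 2 ^ q"
  define x where "x = (r - 1) mod 2 ^ q"
  have r_eq: "r = a * 2 ^ q + x + 1"
    using r(1) unfolding a_def x_def by (simp add: div_mult_mod_eq)
  have "r - 1 < 2 ^ k * 2 ^ q"
    using r by (simp add: power_add)
  then have "a < 2 ^ k"
    unfolding a_def by (simp add: less_mult_imp_div_less)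
  moreover have "x < 2 ^ q"
    unfolding x_def by simp
  ultimately have "sylvester (k + q) r (c * 2 ^ q + j + 1)
                 = sylvester k (a + 1) (c + 1) * sylvester q (x + 1) (j + 1)"
    unfolding r_eq using sylvester_kronecker assms(3,4) by blast
  then show ?thesis
    unfolding unitary_H_def a_def[symmetric] x_def[symmetric]
    by (simp add: power_add real_sqrt_mult)
qed

lemma scattering_carrier: "scattering U s t \<in> carrier_mat (length t) (length s)"
  unfolding scattering_def by simp

lemma scattering_permute_list:
  assumes "p permutes {..<length t}"
  shows "scattering U s (permute_list p t)
       = mat (length t) (length s) (\<lambda>(i, j). scattering U s t $$ (p i, j))"
  unfolding scattering_def
  using assms permutes_in_image[OF assms] by (intro eq_matI) (auto simp: permute_list_nth)

lemma
  assumes "length s = length t"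
  shows permanent_scattering_sort: "permanent (scattering U s (sort t)) = permanent (scattering U s t)"
    and abs_det_scattering_sort: "\<bar>det (scattering U s (sort t))\<bar> = \<bar>det (scattering U s t)\<bar>"
proof -
  obtain p where p: "p permutes {..<length t}" "permute_list p t = sort t"
    using mset_eq_permutation[of "sort t" t] by auto
  have p': "p permutes {0..<length t}"
    using p(1) by (simp add: lessThan_atLeast0)
  have S: "scattering U s t \<in> carrier_mat (length t) (length t)"
    using scattering_carrier assms by metis
  note sorted = scattering_permute_list[OF p(1), of U s, unfolded p(2) assms[symmetric]]
  show "permanent (scattering U s (sort t)) = permanent (scattering U s t)"
    unfolding sorted using permanent_permute_rows[OF S p'] assms by simp
  show "\<bar>det (scattering U s (sort t))\<bar> = \<bar>det (scattering U s t)\<bar>"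
    unfolding sorted using det_permute_rows[OF S p'] assms
    by (simp add: abs_mult sign_def)
qed

lemma scattering_block_input:
  assumes "c < 2 ^ k" "set t \<subseteq> {1..2 ^ (k + q)}" "i < length t" "j < 2 ^ q"
  shows "scattering (unitary_H (k + q)) (map (\<lambda>i. i + 2 ^ q * c) [1..<2 ^ q + 1]) t $$ (i, j)
       = sylvester k ((t ! i - 1) div 2 ^ q + 1) (c + 1) / sqrt (2 ^ k)
         * scattering (unitary_H q) [1..<2 ^ q + 1] (map (\<lambda>x. (x - 1) mod 2 ^ q + 1) t) $$ (i, j)"
proof -
  have "t ! i \<in> {1..2 ^ (k + q)}"
    using assms(2,3) nth_mem by blast
  then show ?thesis
    unfolding scattering_def using unitary_H_kronecker[OF _ _ assms(1,4)] assms(3,4)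
    by (simp add: algebra_simps del: upt_Suc)
qed

lemma normalization_pos: "normalization s t > 0"
  unfolding normalization_def by (simp add: prod_pos)

theorem proposition4:
  fixes k q c :: nat and t :: "nat list"
  assumes "c \<le> 2 ^ k - 1"
    and "is_state (2 ^ (k + q)) (2 ^ q) t"
  shows "(suppressed_boson (unitary_H (k + q)) (map (\<lambda>i. i + 2 ^ q * c) [1..<2 ^ q + 1]) t
            \<longleftrightarrow> suppressed_boson (unitary_H q) [1..<2 ^ q + 1] (fold_state (2 ^ q) t))
       \<and> (suppressed_fermion (unitary_H (k + q)) (map (\<lambda>i. i + 2 ^ q * c) [1..<2 ^ q + 1]) t
            \<longleftrightarrow> suppressed_fermion (unitary_H q) [1..<2 ^ q + 1] (fold_state (2 ^ q) t))"
proof -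
  define n :: nat where "n = 2 ^ q"
  define u where "u = map (\<lambda>x. (x - 1) mod n + 1) t"
  define e where "e i = sylvester k ((t ! i - 1) div n + 1) (c + 1) / sqrt (2 ^ k)" for i
  let ?S = "scattering (unitary_H (k + q)) (map (\<lambda>i. i + n * c) [1..<n + 1]) t"
  let ?B = "scattering (unitary_H q) [1..<n + 1] u"
  have c: "c < 2 ^ k"
    using assms(1) by (simp add: le_diff_conv2 Suc_le_eq)
  have t: "length t = n" "set t \<subseteq> {1..2 ^ (k + q)}"
    using assms(2) unfolding is_state_def n_def by simp_all
  have carrier: "?S \<in> carrier_mat n n" "?B \<in> carrier_mat n n"
    using scattering_carrier t(1) unfolding u_def by (metis length_map length_upt diff_add_inverse2)+
  have rows: "?S $$ (i, j) = e i * ?B $$ (i, j)" if "i < n" "j < n" for i j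
    using scattering_block_input[OF c t(2)] that t(1) unfolding e_def u_def n_def by simp
  have len: "length [1..<n + 1] = length u"
    using t(1) unfolding u_def by simp
  have "prod e {0..<n} \<noteq> 0"
    unfolding e_def by (simp add: sylvester_neq_0)
  then have "permanent ?S = 0 \<longleftrightarrow> permanent ?B = 0" "det ?S = 0 \<longleftrightarrow> det ?B = 0"
    using permanent_scale_rows[OF carrier rows] det_scale_rows[OF carrier rows] by simp_all
  moreover have "permanent (scattering (unitary_H q) [1..<n + 1] (sort u)) = permanent ?B"
    by (rule permanent_scattering_sort[OF len])
  moreover have "det (scattering (unitary_H q) [1..<n + 1] (sort u)) = 0 \<longleftrightarrow> det ?B = 0"
    using abs_det_scattering_sort[OF len, of "unitary_H q"] by (metis abs_eq_0)
  ultimately show ?thesis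
    unfolding suppressed_boson_def suppressed_fermion_def boson_amp_def fermion_amp_def
      fold_state_def u_def n_def
    by (simp add: normalization_pos[THEN less_imp_neq, symmetric] del: upt_Suc)
qed

end
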